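(* Let \(X\) be a complete metric space, \(n\geq 1\), and \(T\colon \mathcal{D}^n(X)\to\mathbb{R}\) a multilinear functional. Then \(T\) is a current if and only if it is an \(\mathbf{L}^\infty\)-current. Moreover, \(\|T\|=\|T\|_{\mathbf{L}^\infty}\).
   Context: \(\mathcal{D}^n(X)\) is the set of pairs \((f,\pi)\) with \(f\colon X\to\mathbb{R}\) bounded Lipschitz and \(\pi=(\pi^{(1)},\dots,\pi^{(n)})\colon X\to\mathbb{R}^n\) Lipschitz; "multilinear" means multilinear in \((f,\pi^{(1)},\dots,\pi^{(n)})\). For a map \(g\) between metric spaces, \(\mathrm{Lip}(g)\) denotes its best Lipschitz constant. Given a seminorm \(\mathbf{L}\colon \mathrm{Lip}(X,\mathbb{R}^n)\to\mathbb{R}\) (a "Lipschitz norm"), a multilinear \(T\colon\mathcal{D}^n(X)\to\mathbb{R}\) is an \(\mathbf{L}\)-current if: (1) whenever \(\pi_i\to\pi\) pointwise with \(\pi\in\mathrm{Lip}(X,\mathbb{R}^n)\) and \(\sup_i\mathbf{L}(\pi_i)<\infty\), then \(T(f,\pi_i)\to T(f,\pi)\); (2) \(T(f,\pi)=0\) whenever some \(\pi^{(i)}\) is constant on an open neighborhood of \(\mathrm{spt}(f)\); (3) there is a finite Borel measure \(\mu\) on \(X\) with \(|T(f,\pi)|\le \mathbf{L}(\pi)^n\int_X|f|\,d\mu\) for all \((f,\pi)\in\mathcal{D}^n(X)\). The minimal such \(\mu\) is the mass measure \(\|T\|_{\mathbf{L}}\). \(T\) is a current (in the sense of Ambrosio–Kirchheim)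 if it satisfies the same three conditions with "\(\sup_i\mathbf{L}(\pi_i)<\infty\)" replaced by "\(\sup_{i,j}\mathrm{Lip}(\pi_i^{(j)})<\infty\)" and with \(\mathbf{L}(\pi)^n\) replaced by \(\prod_{i=1}^n\mathrm{Lip}(\pi^{(i)})\); its mass measure \(\|T\|\) is the minimal measure \(\mu\) in the corresponding inequality. \(\mathbf{L}^\infty(\pi)=\max_{i=1,\dots,n}\mathrm{Lip}(\pi^{(i)})\). *)

theory Defs
  imports "HOL-Analysis.Analysis"
begin

text \<open>The metric space X is the type 'a. An n-tuple pi = (pi^(1),...,pi^(n)) of real functions
  is represented as a function pi :: 'n => 'a => real, where the finite type 'n indexes the
  components (n = CARD('n) >= 1 automatically). A functional T on D^n(X) is a function
  T :: ('a => real) => ('n => 'a => real) => real; only its values on D^n(X) matter.\<close>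

definition is_lipschitz :: "('a::metric_space \<Rightarrow> real) \<Rightarrow> bool" where
  "is_lipschitz g \<longleftrightarrow> (\<exists>C. C-lipschitz_on UNIV g)"

definition lipconst :: "('a::metric_space \<Rightarrow> real) \<Rightarrow> real" where
  "lipconst g = Inf {C. 0 \<le> C \<and> C-lipschitz_on UNIV g}"

definition in_D :: "('a::metric_space \<Rightarrow> real) \<Rightarrow> ('n \<Rightarrow> 'a \<Rightarrow> real) \<Rightarrow> bool" where
  "in_D f \<pi> \<longleftrightarrow> is_lipschitz f \<and> bounded (range f) \<and> (\<forall>i. is_lipschitz (\<pi> i))"

definition multilinear_D ::
  "(('a::metric_space \<Rightarrow> real) \<Rightarrow> ('n \<Rightarrow> 'a \<Rightarrow> real) \<Rightarrow> real) \<Rightarrow> bool" where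
  "multilinear_D T \<longleftrightarrow>
     (\<forall>f g \<pi> a b. in_D f \<pi> \<and> in_D g \<pi> \<longrightarrow>
        T (\<lambda>x. a * f x + b * g x) \<pi> = a * T f \<pi> + b * T g \<pi>) \<and>
     (\<forall>f \<pi> i p q a b. in_D f (\<pi>(i := p)) \<and> in_D f (\<pi>(i := q)) \<longrightarrow>
        T f (\<pi>(i := (\<lambda>x. a * p x + b * q x))) = a * T f (\<pi>(i := p)) + b * T f (\<pi>(i := q)))"

definition spt :: "('a::metric_space \<Rightarrow> real) \<Rightarrow> 'a set" where
  "spt f = closure {x. f x \<noteq> 0}"

definition locality_D ::
  "(('a::metric_space \<Rightarrow> real) \<Rightarrow> ('n \<Rightarrow> 'a \<Rightarrow> real) \<Rightarrow> real) \<Rightarrow> bool" where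
  "locality_D T \<longleftrightarrow>
     (\<forall>f \<pi>. in_D f \<pi> \<and>
        (\<exists>i U c. open U \<and> spt f \<subseteq> U \<and> (\<forall>x\<in>U. \<pi> i x = c)) \<longrightarrow> T f \<pi> = 0)"

definition finite_borel_measure :: "'a::metric_space measure \<Rightarrow> bool" where
  "finite_borel_measure \<mu> \<longleftrightarrow> sets \<mu> = sets borel \<and> finite_measure \<mu>"

definition minimal_measure :: "('a::metric_space measure \<Rightarrow> bool) \<Rightarrow> 'a measure \<Rightarrow> bool" where
  "minimal_measure P \<mu> \<longleftrightarrow> P \<mu> \<and>
     (\<forall>\<nu>. P \<nu> \<longrightarrow> (\<forall>A\<in>sets borel. emeasure \<mu> A \<le> emeasure \<nu> A))"

definition L_mass_bound ::
  "(('n::finite \<Rightarrow> 'a::metric_space \<Rightarrow> real) \<Rightarrow> real) \<Rightarrow>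
   (('a \<Rightarrow> real) \<Rightarrow> ('n \<Rightarrow> 'a \<Rightarrow> real) \<Rightarrow> real) \<Rightarrow> 'a measure \<Rightarrow> bool" where
  "L_mass_bound L T \<mu> \<longleftrightarrow> finite_borel_measure \<mu> \<and>
     (\<forall>f \<pi>. in_D f \<pi> \<longrightarrow> \<bar>T f \<pi>\<bar> \<le> L \<pi> ^ CARD('n) * integral\<^sup>L \<mu> (\<lambda>x. \<bar>f x\<bar>))"

definition L_current ::
  "(('n::finite \<Rightarrow> 'a::metric_space \<Rightarrow> real) \<Rightarrow> real) \<Rightarrow>
   (('a \<Rightarrow> real) \<Rightarrow> ('n \<Rightarrow> 'a \<Rightarrow> real) \<Rightarrow> real) \<Rightarrow> bool" where
  "L_current L T \<longleftrightarrow> multilinear_D T \<and>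
     (\<forall>f \<pi> \<pi>s. in_D f \<pi> \<and> (\<forall>k. in_D f (\<pi>s k)) \<and>
        (\<forall>i x. (\<lambda>k. \<pi>s k i x) \<longlonglongrightarrow> \<pi> i x) \<and>
        (\<exists>C. \<forall>k. L (\<pi>s k) \<le> C)
        \<longrightarrow> (\<lambda>k. T f (\<pi>s k)) \<longlonglongrightarrow> T f \<pi>) \<and>
     locality_D T \<and>
     (\<exists>\<mu>. L_mass_bound L T \<mu>)"

definition L_mass ::
  "(('n::finite \<Rightarrow> 'a::metric_space \<Rightarrow> real) \<Rightarrow> real) \<Rightarrow>
   (('a \<Rightarrow> real) \<Rightarrow> ('n \<Rightarrow> 'a \<Rightarrow> real) \<Rightarrow> real) \<Rightarrow> 'a measure \<Rightarrow> bool" where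
  "L_mass L T \<mu> \<longleftrightarrow> minimal_measure (L_mass_bound L T) \<mu>"

definition Linf :: "(('n::finite) \<Rightarrow> 'a::metric_space \<Rightarrow> real) \<Rightarrow> real" where
  "Linf \<pi> = Max (range (\<lambda>i. lipconst (\<pi> i)))"

definition AK_mass_bound ::
  "(('a::metric_space \<Rightarrow> real) \<Rightarrow> (('n::finite) \<Rightarrow> 'a \<Rightarrow> real) \<Rightarrow> real) \<Rightarrow> 'a measure \<Rightarrow> bool" where
  "AK_mass_bound T \<mu> \<longleftrightarrow> finite_borel_measure \<mu> \<and>
     (\<forall>f \<pi>. in_D f \<pi> \<longrightarrow>
        \<bar>T f \<pi>\<bar> \<le> (\<Prod>i\<in>UNIV. lipconst (\<pi> i)) * integral\<^sup>L \<mu> (\<lambda>x. \<bar>f x\<bar>))"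

definition AK_current ::
  "(('a::metric_space \<Rightarrow> real) \<Rightarrow> (('n::finite) \<Rightarrow> 'a \<Rightarrow> real) \<Rightarrow> real) \<Rightarrow> bool" where
  "AK_current T \<longleftrightarrow> multilinear_D T \<and>
     (\<forall>f \<pi> \<pi>s. in_D f \<pi> \<and> (\<forall>k. in_D f (\<pi>s k)) \<and>
        (\<forall>i x. (\<lambda>k. \<pi>s k i x) \<longlonglongrightarrow> \<pi> i x) \<and>
        (\<exists>C. \<forall>k i. lipconst (\<pi>s k i) \<le> C)
        \<longrightarrow> (\<lambda>k. T f (\<pi>s k)) \<longlonglongrightarrow> T f \<pi>) \<and>
     locality_D T \<and>
     (\<exists>\<mu>. AK_mass_bound T \<mu>)"

definition AK_mass ::
  "(('a::metric_space \<Rightarrow> real) \<Rightarrow> (('n::finite) \<Rightarrow> 'a \<Rightarrow> real) \<Rightarrow> real) \<Rightarrow> 'a measure \<Rightarrow> bool" where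
  "AK_mass T \<mu> \<longleftrightarrow> minimal_measure (AK_mass_bound T) \<mu>"

end

theory Submission
  imports Defs
begin

text \<open>The two mass inequalities differ only in the factor in front of the integral: the product
  of the Lipschitz constants of the components for currents, its n-th power of their maximum for
  \<open>L\<^sup>\<infinity>\<close>-currents. The first is at most the second, which gives one direction. Conversely,
  a component with Lipschitz constant 0 is constant, so \<open>T(f,\<pi>) = 0\<close> by locality; otherwise
  rescaling every component to Lipschitz constant 1 makes both factors equal to 1, and
  multilinearity transports the bound back to \<open>\<pi>\<close>. So both notions admit the same measures in
  the mass inequality, and the continuity axioms agree because bounding \<open>L\<^sup>\<infinity>\<close> along a
  sequence bounds every component.\<close>

lemma lipconst_nonneg:
  assumes "is_lipschitz g"
  shows "0 \<le> lipconst g"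
proof -
  from assms obtain C where "C-lipschitz_on UNIV g"
    unfolding is_lipschitz_def by blast
  then have "{C. 0 \<le> C \<and> C-lipschitz_on UNIV g} \<noteq> {}"
    using lipschitz_on_nonneg by blast
  then show ?thesis
    unfolding lipconst_def by (rule cInf_greatest) auto
qed

lemma lipconst_le:
  assumes "C-lipschitz_on UNIV g"
  shows "lipconst g \<le> C"
  unfolding lipconst_def by (rule cInf_lower) (use assms lipschitz_on_nonneg in auto)

lemma lipschitz_on_lipconst:
  assumes "is_lipschitz g"
  shows "(lipconst g)-lipschitz_on UNIV g"
proof (rule lipschitz_onI)
  show "0 \<le> lipconst g"
    using assms by (rule lipconst_nonneg)
  fix x y :: 'a
  from assms obtain C where "C-lipschitz_on UNIV g"
    unfolding is_lipschitz_def by blast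
  then have ne: "{C. 0 \<le> C \<and> C-lipschitz_on UNIV g} \<noteq> {}"
    using lipschitz_on_nonneg by blast
  show "dist (g x) (g y) \<le> lipconst g * dist x y"
  proof (cases "x = y")
    case False
    then have pos: "dist x y > 0"
      by simp
    have "dist (g x) (g y) / dist x y \<le> lipconst g"
      unfolding lipconst_def
    proof (rule cInf_greatest[OF ne])
      fix C
      assume "C \<in> {C. 0 \<le> C \<and> C-lipschitz_on UNIV g}"
      then have "dist (g x) (g y) \<le> C * dist x y"
        using lipschitz_onD by blast
      then show "dist (g x) (g y) / dist x y \<le> C"
        using pos by (simp add: divide_simps)
    qed
    then show ?thesis
      using pos by (simp add: divide_simps)
  qed simp
qed

lemma lipconst_eq_0_imp_constant:
  assumes "is_lipschitz g" "lipconst g = 0"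
  shows "g x = g y"
  using lipschitz_onD[OF lipschitz_on_lipconst[OF assms(1)], of x y] assms(2) by simp

lemma is_lipschitz_cmult:
  assumes "is_lipschitz g"
  shows "is_lipschitz (\<lambda>x. c * g x)"
  using assms lipschitz_on_cmult_real unfolding is_lipschitz_def by blast

lemma lipconst_cmult_le:
  assumes "is_lipschitz g"
  shows "lipconst (\<lambda>x. c * g x) \<le> \<bar>c\<bar> * lipconst g"
  using lipschitz_on_cmult_real[OF lipschitz_on_lipconst[OF assms]] by (rule lipconst_le)

lemma lipconst_le_Linf:
  fixes \<pi> :: "'n::finite \<Rightarrow> 'a::metric_space \<Rightarrow> real"
  shows "lipconst (\<pi> i) \<le> Linf \<pi>"
  unfolding Linf_def by (rule Max_ge) auto

lemma Linf_le_iff: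
  fixes \<pi> :: "'n::finite \<Rightarrow> 'a::metric_space \<Rightarrow> real"
  shows "Linf \<pi> \<le> C \<longleftrightarrow> (\<forall>i. lipconst (\<pi> i) \<le> C)"
  unfolding Linf_def by (subst Max_le_iff) auto

lemma Linf_nonneg:
  fixes \<pi> :: "'n::finite \<Rightarrow> 'a::metric_space \<Rightarrow> real"
  assumes "\<And>i. is_lipschitz (\<pi> i)"
  shows "0 \<le> Linf \<pi>"
  using lipconst_nonneg[OF assms] lipconst_le_Linf order_trans by blast

lemma prod_lipconst_le_Linf_power:
  fixes \<pi> :: "'n::finite \<Rightarrow> 'a::metric_space \<Rightarrow> real"
  assumes "\<And>i. is_lipschitz (\<pi> i)"
  shows "(\<Prod>i\<in>UNIV. lipconst (\<pi> i)) \<le> Linf \<pi> ^ CARD('n)"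
proof -
  have "(\<Prod>i\<in>UNIV. lipconst (\<pi> i)) \<le> (\<Prod>i\<in>(UNIV::'n set). Linf \<pi>)"
    by (rule prod_mono) (use assms lipconst_nonneg lipconst_le_Linf in auto)
  then show ?thesis
    by simp
qed

lemma in_D_scale_components:
  assumes "in_D f \<pi>"
  shows "in_D f (\<lambda>i. if i \<in> S then (\<lambda>x. c i * \<pi> i x) else \<pi> i)"
  using assms is_lipschitz_cmult unfolding in_D_def by auto

lemma multilinear_D_scale_component:
  assumes "multilinear_D T" "in_D f \<pi>"
  shows "T f (\<pi>(i := (\<lambda>x. c * \<pi> i x))) = c * T f \<pi>"
proof -
  have "in_D f (\<pi>(i := \<pi> i))"
    using assms(2) by simp
  then have "T f (\<pi>(i := (\<lambda>x. c * \<pi> i x + 0 * \<pi> i x)))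
      = c * T f (\<pi>(i := \<pi> i)) + 0 * T f (\<pi>(i := \<pi> i))"
    using assms(1) unfolding multilinear_D_def by blast
  then show ?thesis
    by simp
qed

lemma multilinear_D_scale_components:
  assumes "multilinear_D T" "in_D f \<pi>" "finite S"
  shows "T f (\<lambda>i. if i \<in> S then (\<lambda>x. c i * \<pi> i x) else \<pi> i) = (\<Prod>i\<in>S. c i) * T f \<pi>"
  using assms(3)
proof (induction S rule: finite_induct)
  case (insert j S)
  define \<rho> where "\<rho> = (\<lambda>i. if i \<in> S then (\<lambda>x. c i * \<pi> i x) else \<pi> i)"
  have "(\<lambda>i. if i \<in> insert j S then (\<lambda>x. c i * \<pi> i x) else \<pi> i) = \<rho>(j := (\<lambda>x. c j * \<rho> j x))"
    using insert.hyps(2) unfolding \<rho>_def by auto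
  moreover have "T f (\<rho>(j := (\<lambda>x. c j * \<rho> j x))) = c j * T f \<rho>"
    using assms(1) in_D_scale_components[OF assms(2)] unfolding \<rho>_def
    by (rule multilinear_D_scale_component)
  ultimately show ?case
    using insert.IH insert.hyps unfolding \<rho>_def by simp
qed simp

lemma AK_mass_bound_imp_L_mass_bound:
  fixes T :: "('a::metric_space \<Rightarrow> real) \<Rightarrow> ('n::finite \<Rightarrow> 'a \<Rightarrow> real) \<Rightarrow> real"
  assumes "AK_mass_bound T \<mu>"
  shows "L_mass_bound Linf T \<mu>"
  unfolding L_mass_bound_def
proof (intro conjI allI impI)
  show "finite_borel_measure \<mu>"
    using assms unfolding AK_mass_bound_def by blast
  fix f and \<pi> :: "'n \<Rightarrow> 'a \<Rightarrow> real"
  assume D: "in_D f \<pi>"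
  then have "(\<Prod>i\<in>UNIV. lipconst (\<pi> i)) \<le> Linf \<pi> ^ CARD('n)"
    by (intro prod_lipconst_le_Linf_power) (simp add: in_D_def)
  moreover have "\<bar>T f \<pi>\<bar> \<le> (\<Prod>i\<in>UNIV. lipconst (\<pi> i)) * integral\<^sup>L \<mu> (\<lambda>x. \<bar>f x\<bar>)"
    using assms D unfolding AK_mass_bound_def by blast
  ultimately show "\<bar>T f \<pi>\<bar> \<le> Linf \<pi> ^ CARD('n) * integral\<^sup>L \<mu> (\<lambda>x. \<bar>f x\<bar>)"
    using mult_right_mono[of _ _ "integral\<^sup>L \<mu> (\<lambda>x. \<bar>f x\<bar>)"] order_trans by fastforce
qed

lemma L_mass_bound_Linf_le_1:
  fixes T :: "('a::metric_space \<Rightarrow> real) \<Rightarrow> ('n::finite \<Rightarrow> 'a \<Rightarrow> real) \<Rightarrow> real"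
  assumes "L_mass_bound Linf T \<mu>" "in_D f \<sigma>" "Linf \<sigma> \<le> 1"
  shows "\<bar>T f \<sigma>\<bar> \<le> integral\<^sup>L \<mu> (\<lambda>x. \<bar>f x\<bar>)"
proof -
  have "0 \<le> Linf \<sigma>"
    using assms(2) by (intro Linf_nonneg) (simp add: in_D_def)
  then have "Linf \<sigma> ^ CARD('n) \<le> 1"
    using assms(3) by (rule power_le_one)
  moreover have "\<bar>T f \<sigma>\<bar> \<le> Linf \<sigma> ^ CARD('n) * integral\<^sup>L \<mu> (\<lambda>x. \<bar>f x\<bar>)"
    using assms(1,2) unfolding L_mass_bound_def by blast
  ultimately show ?thesis
    using mult_right_mono[of _ 1 "integral\<^sup>L \<mu> (\<lambda>x. \<bar>f x\<bar>)"] order_trans by fastforce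
qed

lemma L_mass_bound_imp_AK_mass_bound:
  fixes T :: "('a::metric_space \<Rightarrow> real) \<Rightarrow> ('n::finite \<Rightarrow> 'a \<Rightarrow> real) \<Rightarrow> real"
  assumes ml: "multilinear_D T" and loc: "locality_D T" and bound: "L_mass_bound Linf T \<mu>"
  shows "AK_mass_bound T \<mu>"
  unfolding AK_mass_bound_def
proof (intro conjI allI impI)
  show "finite_borel_measure \<mu>"
    using bound unfolding L_mass_bound_def by blast
  fix f and \<pi> :: "'n \<Rightarrow> 'a \<Rightarrow> real"
  assume D: "in_D f \<pi>"
  define L where "L i = lipconst (\<pi> i)" for i
  have lip: "is_lipschitz (\<pi> i)" for i
    using D unfolding in_D_def by blast
  have I: "0 \<le> integral\<^sup>L \<mu> (\<lambda>x. \<bar>f x\<bar>)"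
    by simp
  show "\<bar>T f \<pi>\<bar> \<le> (\<Prod>i\<in>UNIV. lipconst (\<pi> i)) * integral\<^sup>L \<mu> (\<lambda>x. \<bar>f x\<bar>)"
  proof (cases "\<exists>i. L i = 0")
    case True
    then obtain i where "L i = 0"
      by blast
    then have "\<forall>x\<in>UNIV. \<pi> i x = \<pi> i undefined"
      using lipconst_eq_0_imp_constant[OF lip] unfolding L_def by blast
    then have "T f \<pi> = 0"
      using loc D unfolding locality_D_def by blast
    moreover have "0 \<le> (\<Prod>i\<in>UNIV. lipconst (\<pi> i))"
      by (intro prod_nonneg) (simp add: lipconst_nonneg[OF lip])
    ultimately show ?thesis
      using I by simp
  next
    case False
    then have L_pos: "L i > 0" for i
      using lipconst_nonneg[OF lip] unfolding L_def by (metis order_le_less)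
    define \<sigma> where "\<sigma> = (\<lambda>i. if i \<in> UNIV then (\<lambda>x. (1 / L i) * \<pi> i x) else \<pi> i)"
    have "in_D f \<sigma>"
      unfolding \<sigma>_def by (rule in_D_scale_components[OF D])
    moreover have "lipconst (\<sigma> i) \<le> 1" for i
      using lipconst_cmult_le[OF lip[of i], of "1 / L i"] L_pos[of i] unfolding \<sigma>_def L_def by simp
    ultimately have "\<bar>T f \<sigma>\<bar> \<le> integral\<^sup>L \<mu> (\<lambda>x. \<bar>f x\<bar>)"
      by (simp add: L_mass_bound_Linf_le_1[OF bound] Linf_le_iff)
    moreover have "T f \<sigma> = (\<Prod>i\<in>UNIV. 1 / L i) * T f \<pi>"
      unfolding \<sigma>_def by (rule multilinear_D_scale_components[OF ml D]) simp
    then have "T f \<sigma> = T f \<pi> / (\<Prod>i\<in>UNIV. L i)"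
      by (simp add: prod_dividef)
    moreover have "(\<Prod>i\<in>UNIV. L i) > 0"
      using L_pos by (simp add: prod_pos)
    ultimately show ?thesis
      unfolding L_def by (simp add: abs_div divide_le_eq mult.commute)
  qed
qed

lemma L_mass_bound_Linf_eq_AK_mass_bound:
  fixes T :: "('a::metric_space \<Rightarrow> real) \<Rightarrow> ('n::finite \<Rightarrow> 'a \<Rightarrow> real) \<Rightarrow> real"
  assumes "multilinear_D T" "locality_D T"
  shows "L_mass_bound Linf T = AK_mass_bound T"
  using AK_mass_bound_imp_L_mass_bound L_mass_bound_imp_AK_mass_bound[OF assms] by blast

lemma bounded_Linf_iff_bounded_lipconst:
  fixes \<pi>s :: "nat \<Rightarrow> 'n::finite \<Rightarrow> 'a::metric_space \<Rightarrow> real"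
  shows "(\<exists>C. \<forall>k. Linf (\<pi>s k) \<le> C) \<longleftrightarrow> (\<exists>C. \<forall>k i. lipconst (\<pi>s k i) \<le> C)"
  by (simp add: Linf_le_iff)

lemma AK_current_iff_L_current_Linf:
  fixes T :: "('a::metric_space \<Rightarrow> real) \<Rightarrow> ('n::finite \<Rightarrow> 'a \<Rightarrow> real) \<Rightarrow> real"
  assumes "multilinear_D T"
  shows "AK_current T \<longleftrightarrow> L_current Linf T"
proof (cases "locality_D T")
  case True
  show ?thesis
    unfolding AK_current_def L_current_def bounded_Linf_iff_bounded_lipconst
      L_mass_bound_Linf_eq_AK_mass_bound[OF assms True] ..
qed (simp add: AK_current_def L_current_def)

theorem proposition1p2:
  fixes T :: "('a::complete_space \<Rightarrow> real) \<Rightarrow> ('n::finite \<Rightarrow> 'a \<Rightarrow> real) \<Rightarrow> real"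
  assumes "multilinear_D T"
  shows "(AK_current T \<longleftrightarrow> L_current Linf T) \<and>
         (AK_current T \<longrightarrow> (\<forall>\<mu>. AK_mass T \<mu> \<longleftrightarrow> L_mass Linf T \<mu>))"
proof (intro conjI impI allI)
  show "AK_current T \<longleftrightarrow> L_current Linf T"
    using assms by (rule AK_current_iff_L_current_Linf)
  fix \<mu>
  assume "AK_current T"
  then have "locality_D T"
    unfolding AK_current_def by blast
  then show "AK_mass T \<mu> \<longleftrightarrow> L_mass Linf T \<mu>"
    using assms by (simp add: AK_mass_def L_mass_def L_mass_bound_Linf_eq_AK_mass_bound)
qed

end
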